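(* Let $(X,\mathcal{A},\mu,T)$ be an ergodic probability preserving system. a) For every set $A\in\mathcal{A}$ (with $\mu(A)>0$) and integer $m\ge0$, $d_{[0,\infty]^{\mathbb{N}_0}}(\mu(A)\Phi_A\circ T^m,\mu(A)\Phi_A)\le m\mu(A)$ on $\{\varphi_A>m\}$. b) If $(A_l)_{l\ge1}$ is a sequence of asymptotically rare events and $R_l:=\mu(A_l)\Phi_{A_l}:X\to[0,\infty]^{\mathbb{N}_0}$, then $(R_l)$ is asymptotically $T$-invariant in measure. c) Likewise, if $R_l:=\mu(A_l)\Phi_{A_l}\circ T_{A_l}:X\to[0,\infty]^{\mathbb{N}}$, then $(R_l)$ is asymptotically $T$-invariant in measure.
   Context: For $A$ with $\mu(A)>0$: $\varphi_A(x):=\inf\{n\ge1:T^nx\in A\}$, $T_Ax:=T^{\varphi_A(x)}x$, $\Phi_A:=(\varphi_A,\varphi_A\circ T_A,\varphi_A\circ T_A^2,\ldots)$. $[0,\infty]$ carries the metric $d_{[0,\infty]}(s,t)=|e^{-s}-e^{-t}|$ and $[0,\infty]^{\mathbb{N}_0}$ the product metric $d(s,t)=\sum_{j\ge0}2^{-(j+1)}d_{[0,\infty]}(s^{(j)},t^{(j)})$ (similarly on $[0,\infty]^{\mathbb{N}}$). Asymptotically rare: $0<\mu(A_l)\to0$. $(R_l)$ asymptotically $T$-invariant in measure: $d(R_l\circ T,R_l)\to0$ in $\mu$-measure. *)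

theory Defs
  imports "HOL-Probability.Probability"
begin

definition ergodic_pps :: "'a measure \<Rightarrow> ('a \<Rightarrow> 'a) \<Rightarrow> bool" where
  "ergodic_pps M T \<longleftrightarrow> prob_space M \<and> T \<in> measurable M M \<and> distr M M T = M \<and>
     (\<forall>B \<in> sets M. T -` B \<inter> space M = B \<longrightarrow> measure M B = 0 \<or> measure M B = 1)"

definition hit_time :: "('a \<Rightarrow> 'a) \<Rightarrow> 'a set \<Rightarrow> 'a \<Rightarrow> ennreal" where
  "hit_time T A x = (if \<exists>n\<ge>1. (T ^^ n) x \<in> A
      then of_nat (LEAST n. n \<ge> 1 \<and> (T ^^ n) x \<in> A) else \<infinity>)"

text \<open>First return map T_A x = T^{phi_A x} x (convention: T_A x = x where phi_A x = \<infinity>).\<close>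
definition return_map :: "('a \<Rightarrow> 'a) \<Rightarrow> 'a set \<Rightarrow> 'a \<Rightarrow> 'a" where
  "return_map T A x = (if \<exists>n\<ge>1. (T ^^ n) x \<in> A
      then (T ^^ (LEAST n. n \<ge> 1 \<and> (T ^^ n) x \<in> A)) x else x)"

definition Phi :: "('a \<Rightarrow> 'a) \<Rightarrow> 'a set \<Rightarrow> 'a \<Rightarrow> nat \<Rightarrow> ennreal" where
  "Phi T A x = (\<lambda>j. hit_time T A ((return_map T A ^^ j) x))"

definition expneg :: "ennreal \<Rightarrow> real" where
  "expneg s = (if s = \<infinity> then 0 else exp (- enn2real s))"

definition dist_ext :: "ennreal \<Rightarrow> ennreal \<Rightarrow> real" where
  "dist_ext s t = \<bar>expneg s - expneg t\<bar>"

definition dist_seq :: "(nat \<Rightarrow> ennreal) \<Rightarrow> (nat \<Rightarrow> ennreal) \<Rightarrow> real" where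
  "dist_seq s t = (\<Sum>j. (1/2) ^ (Suc j) * dist_ext (s j) (t j))"

definition scale_seq :: "real \<Rightarrow> (nat \<Rightarrow> ennreal) \<Rightarrow> nat \<Rightarrow> ennreal" where
  "scale_seq c s = (\<lambda>j. ennreal c * s j)"

definition asymp_rare :: "'a measure \<Rightarrow> (nat \<Rightarrow> 'a set) \<Rightarrow> bool" where
  "asymp_rare M A \<longleftrightarrow> (\<forall>l. A l \<in> sets M \<and> measure M (A l) > 0) \<and>
     (\<lambda>l. measure M (A l)) \<longlonglongrightarrow> 0"

definition asymp_T_inv_in_measure ::
  "'a measure \<Rightarrow> ('a \<Rightarrow> 'a) \<Rightarrow> (nat \<Rightarrow> 'a \<Rightarrow> nat \<Rightarrow> ennreal) \<Rightarrow> bool" where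
  "asymp_T_inv_in_measure M T R \<longleftrightarrow> (\<forall>\<epsilon>>0.
     (\<lambda>l. measure M {x \<in> space M. dist_seq (R l (T x)) (R l x) > \<epsilon>}) \<longlonglongrightarrow> 0)"

end

theory Submission
  imports Defs
begin

text \<open>If the first visit of \<open>x\<close> to \<open>A\<close> happens after time \<open>m\<close>, then \<open>T\<^sup>m x\<close> makes the same
  visit \<open>m\<close> steps earlier: \<open>\<phi>\<^sub>A(T\<^sup>m x) = \<phi>\<^sub>A(x) - m\<close> and \<open>T\<^sub>A(T\<^sup>m x) = T\<^sub>A x\<close>. Hence
  \<open>\<Phi>\<^sub>A(T\<^sup>m x)\<close> and \<open>\<Phi>\<^sub>A(x)\<close> differ only in their first entry, and since \<open>s \<mapsto> e\<^sup>-\<^sup>s\<close> is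
  1-Lipschitz on \<open>[0,\<infinity>)\<close>, the rescaled sequences are at distance at most \<open>m \<mu>(A) / 2\<close>.
  For (b) and (c) take \<open>m = 1\<close>: outside \<open>T\<^sup>-\<^sup>1 A\<^sub>l\<close> the hitting time of \<open>A\<^sub>l\<close> exceeds 1, and
  \<open>\<mu>(T\<^sup>-\<^sup>1 A\<^sub>l) = \<mu>(A\<^sub>l) \<rightarrow> 0\<close> by invariance of \<open>\<mu>\<close>.\<close>

lemma abs_exp_minus_diff_le:
  fixes a b :: real
  assumes "0 \<le> a" "0 \<le> b"
  shows "\<bar>exp (- a) - exp (- b)\<bar> \<le> \<bar>a - b\<bar>"
proof -
  have one_sided: "exp (- a) - exp (- b) \<le> b - a" if "0 \<le> a" "a \<le> b" for a b :: real
  proof -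
    have "exp (- a) - exp (- b) = exp (- a) * (1 - exp (a - b))"
      by (simp add: algebra_simps flip: exp_add)
    also have "\<dots> \<le> 1 - exp (a - b)"
      using that by (intro mult_left_le_one_le) auto
    also have "\<dots> \<le> b - a"
      using exp_ge_add_one_self[of "a - b"] by linarith
    finally show ?thesis .
  qed
  show ?thesis
    using one_sided[of a b] one_sided[of b a] assms by (cases "a \<le> b") auto
qed

lemma dist_ext_self [simp]: "dist_ext s s = 0"
  by (simp add: dist_ext_def)

lemma dist_ext_ennreal_le:
  assumes "0 \<le> a" "0 \<le> b"
  shows "dist_ext (ennreal a) (ennreal b) \<le> \<bar>a - b\<bar>"
  using assms abs_exp_minus_diff_le by (simp add: dist_ext_def expneg_def)

lemma dist_ext_mult_minus_le:
  assumes "0 \<le> c" "0 \<le> r"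
  shows "dist_ext (ennreal c * (s - ennreal r)) (ennreal c * s) \<le> c * r"
proof (cases s)
  case (real t)
  have "ennreal c * (s - ennreal r) = ennreal (c * max (t - r) 0)"
    using real assms by (simp add: ennreal_minus_if ennreal_mult' max_def)
  moreover have "ennreal c * s = ennreal (c * t)"
    using real assms by (simp add: ennreal_mult')
  moreover have "\<bar>c * max (t - r) 0 - c * t\<bar> \<le> c * r"
    using real assms by (auto simp: max_def abs_if algebra_simps intro: mult_left_mono)
  ultimately show ?thesis
    using real assms dist_ext_ennreal_le[of "c * max (t - r) 0" "c * t"] by simp
next
  case top
  then show ?thesis
    using assms by simp
qed

lemma dist_seq_self [simp]: "dist_seq s s = 0"
  by (simp add: dist_seq_def)

lemma dist_seq_eq_if_tail_eq:
  assumes "\<And>j. s (Suc j) = t (Suc j)"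
  shows "dist_seq s t = dist_ext (s 0) (t 0) / 2"
proof -
  have "dist_seq s t = (\<Sum>j\<in>{0}. (1/2) ^ Suc j * dist_ext (s j) (t j))"
    unfolding dist_seq_def
  proof (rule suminf_finite)
    fix j :: nat
    assume "j \<notin> {0}"
    then show "(1/2) ^ Suc j * dist_ext (s j) (t j) = 0"
      using assms by (cases j) auto
  qed simp
  then show ?thesis
    by simp
qed

lemma first_hit_funpow:
  assumes hit: "\<exists>n\<ge>1. (T ^^ n) x \<in> A"
    and before: "m < (LEAST n. n \<ge> 1 \<and> (T ^^ n) x \<in> A)"
  shows "\<exists>n\<ge>1. (T ^^ n) ((T ^^ m) x) \<in> A"
    and "(LEAST n. n \<ge> 1 \<and> (T ^^ n) ((T ^^ m) x) \<in> A) = (LEAST n. n \<ge> 1 \<and> (T ^^ n) x \<in> A) - m"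
proof -
  define N where "N = (LEAST n. n \<ge> 1 \<and> (T ^^ n) x \<in> A)"
  have N: "N \<ge> 1" "(T ^^ N) x \<in> A"
    using LeastI_ex[OF hit] by (simp_all add: N_def)
  have shift: "(T ^^ n) ((T ^^ m) x) = (T ^^ (n + m)) x" for n
    by (simp add: funpow_add)
  have hit_at: "N - m \<ge> 1 \<and> (T ^^ (N - m)) ((T ^^ m) x) \<in> A"
    using N before by (simp add: shift N_def)
  then show "\<exists>n\<ge>1. (T ^^ n) ((T ^^ m) x) \<in> A"
    by blast
  show "(LEAST n. n \<ge> 1 \<and> (T ^^ n) ((T ^^ m) x) \<in> A) = N - m"
  proof (rule Least_equality)
    fix n
    assume "n \<ge> 1 \<and> (T ^^ n) ((T ^^ m) x) \<in> A"
    then have "N \<le> n + m"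
      unfolding N_def shift by (intro Least_le) simp
    then show "N - m \<le> n"
      by simp
  qed (fact hit_at)
qed

lemma no_hit_funpow:
  assumes "\<not> (\<exists>n\<ge>1. (T ^^ n) x \<in> A)"
  shows "\<not> (\<exists>n\<ge>1. (T ^^ n) ((T ^^ m) x) \<in> A)"
  using assms by (auto simp flip: funpow_add[THEN fun_cong, unfolded comp_def])

lemma hit_time_funpow:
  assumes "of_nat m < hit_time T A x"
  shows "hit_time T A ((T ^^ m) x) = hit_time T A x - of_nat m"
proof (cases "\<exists>n\<ge>1. (T ^^ n) x \<in> A")
  case True
  then have "m < (LEAST n. n \<ge> 1 \<and> (T ^^ n) x \<in> A)"
    using assms by (simp add: hit_time_def)
  with first_hit_funpow[OF True] show ?thesis
    using True by (simp add: hit_time_def of_nat_diff ennreal_of_nat_eq_real_of_nat ennreal_minus)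
next
  case False
  then have "hit_time T A x = \<infinity>" "hit_time T A ((T ^^ m) x) = \<infinity>"
    using no_hit_funpow[OF False, of m] by (simp_all only: hit_time_def if_False)
  then show ?thesis
    by simp
qed

lemma return_map_funpow:
  assumes "\<exists>n\<ge>1. (T ^^ n) x \<in> A" "of_nat m < hit_time T A x"
  shows "return_map T A ((T ^^ m) x) = return_map T A x"
proof -
  have "m < (LEAST n. n \<ge> 1 \<and> (T ^^ n) x \<in> A)"
    using assms by (simp add: hit_time_def)
  with first_hit_funpow[OF assms(1)] show ?thesis
    using assms(1) by (simp add: return_map_def flip: funpow_add[THEN fun_cong, unfolded comp_def])
qed

lemma Phi_0 [simp]: "Phi T A x 0 = hit_time T A x"
  by (simp add: Phi_def)

lemma Phi_Suc: "Phi T A x (Suc j) = Phi T A (return_map T A x) j"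
  by (simp add: Phi_def funpow_Suc_right del: funpow.simps)

lemma Phi_no_hit:
  assumes "\<not> (\<exists>n\<ge>1. (T ^^ n) x \<in> A)"
  shows "Phi T A x j = \<infinity>"
proof -
  have "(return_map T A ^^ j) x = x"
    using assms by (induction j) (auto simp: return_map_def)
  then show ?thesis
    using assms by (simp add: Phi_def hit_time_def)
qed

lemma Phi_funpow_Suc:
  assumes "of_nat m < hit_time T A x"
  shows "Phi T A ((T ^^ m) x) (Suc j) = Phi T A x (Suc j)"
proof (cases "\<exists>n\<ge>1. (T ^^ n) x \<in> A")
  case True
  then show ?thesis
    using return_map_funpow[OF True assms] by (simp add: Phi_Suc)
next
  case False
  then show ?thesis
    using Phi_no_hit no_hit_funpow by metis
qed

lemma hit_time_gt_1:
  assumes "T x \<notin> A"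
  shows "1 < hit_time T A x"
proof (cases "\<exists>n\<ge>1. (T ^^ n) x \<in> A")
  case True
  define N where "N = (LEAST n. n \<ge> 1 \<and> (T ^^ n) x \<in> A)"
  have "N \<ge> 1" "(T ^^ N) x \<in> A"
    using LeastI_ex[OF True] by (simp_all add: N_def)
  with assms have "N > 1"
    by (cases "N = 1") auto
  then show ?thesis
    using True by (simp add: hit_time_def N_def)
qed (auto simp: hit_time_def)

lemma dist_seq_scale_Phi_funpow_le:
  assumes "of_nat m < hit_time T A x" "0 \<le> c"
  shows "dist_seq (scale_seq c (Phi T A ((T ^^ m) x))) (scale_seq c (Phi T A x)) \<le> real m * c / 2"
proof -
  have "dist_seq (scale_seq c (Phi T A ((T ^^ m) x))) (scale_seq c (Phi T A x))
      = dist_ext (ennreal c * (hit_time T A x - ennreal (real m))) (ennreal c * hit_time T A x) / 2"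
    using assms(1) by (subst dist_seq_eq_if_tail_eq)
      (simp_all add: scale_seq_def Phi_funpow_Suc hit_time_funpow ennreal_of_nat_eq_real_of_nat)
  also have "\<dots> \<le> real m * c / 2"
    using dist_ext_mult_minus_le[OF assms(2), of "real m" "hit_time T A x"] by (simp add: mult.commute)
  finally show ?thesis .
qed

lemma asymp_T_inv_in_measureI:
  assumes M: "finite_measure M" and T: "T \<in> measurable M M" "distr M M T = M"
    and rare: "asymp_rare M As"
    and bound: "\<And>l x. x \<in> space M \<Longrightarrow> T x \<notin> As l \<Longrightarrow> dist_seq (R l (T x)) (R l x) \<le> measure M (As l)"
  shows "asymp_T_inv_in_measure M T R"
  unfolding asymp_T_inv_in_measure_def
proof (intro allI impI)
  fix \<epsilon> :: real
  assume "\<epsilon> > 0"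
  define bad where "bad l = {x \<in> space M. \<epsilon> < dist_seq (R l (T x)) (R l x)}" for l
  have As: "As l \<in> sets M" "(\<lambda>l. measure M (As l)) \<longlonglongrightarrow> 0" for l
    using rare by (auto simp: asymp_rare_def)
  have "measure M (bad l) \<le> measure M (As l)" if "measure M (As l) < \<epsilon>" for l
  proof (cases "bad l \<in> sets M")
    case True
    have "bad l \<subseteq> T -` As l \<inter> space M"
      using bound[of _ l] that by (force simp: bad_def)
    then have "measure M (bad l) \<le> measure M (T -` As l \<inter> space M)"
      using M T(1) As(1) True by (intro finite_measure.finite_measure_mono) auto
    also have "\<dots> = measure M (As l)"
      using measure_distr[OF T(1), of "As l"] As(1) T(2) by simp
    finally show ?thesis .
  qed (simp add: measure_notin_sets)
  then have "\<forall>\<^sub>F l in sequentially. measure M (bad l) \<le> measure M (As l)"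
    using order_tendstoD(2)[OF As(2) \<open>\<epsilon> > 0\<close>] by (auto elim: eventually_mono)
  then show "(\<lambda>l. measure M (bad l)) \<longlonglongrightarrow> 0"
    by (intro tendsto_sandwich[OF _ _ tendsto_const As(2)]) auto
qed

theorem mainTheorem12:
  fixes M :: "'a measure" and T :: "'a \<Rightarrow> 'a"
  assumes "ergodic_pps M T"
  shows "(\<forall>A \<in> sets M. measure M A > 0 \<longrightarrow> (\<forall>m::nat. \<forall>x \<in> space M.
            hit_time T A x > of_nat m \<longrightarrow>
            dist_seq (scale_seq (measure M A) (Phi T A ((T ^^ m) x)))
                     (scale_seq (measure M A) (Phi T A x)) \<le> real m * measure M A))
       \<and> (\<forall>As. asymp_rare M As \<longrightarrow>
            asymp_T_inv_in_measure M T (\<lambda>l x. scale_seq (measure M (As l)) (Phi T (As l) x)))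
       \<and> (\<forall>As. asymp_rare M As \<longrightarrow>
            asymp_T_inv_in_measure M T
              (\<lambda>l x. scale_seq (measure M (As l)) (\<lambda>j. Phi T (As l) x (Suc j))))"
proof -
  have M: "finite_measure M" and T: "T \<in> measurable M M" "distr M M T = M"
    using assms by (auto simp: ergodic_pps_def prob_space_def)
  have shift_le: "dist_seq (scale_seq c (Phi T A ((T ^^ m) x))) (scale_seq c (Phi T A x)) \<le> real m * c"
    if "of_nat m < hit_time T A x" "0 \<le> c" for A m x and c :: real
    using dist_seq_scale_Phi_funpow_le[OF that] mult_nonneg_nonneg[of "real m" c] that(2) by linarith
  have step_le: "dist_seq (scale_seq c (Phi T A (T x))) (scale_seq c (Phi T A x)) \<le> c"
    if "T x \<notin> A" "0 \<le> c" for A x and c :: real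
    using shift_le[of 1 A x c] hit_time_gt_1[of T x A, OF that(1)] that(2) by simp
  have tail_step_eq: "(\<lambda>j. Phi T A (T x) (Suc j)) = (\<lambda>j. Phi T A x (Suc j))" if "T x \<notin> A" for A x
    using Phi_funpow_Suc[of 1 T A x] hit_time_gt_1[of T x A, OF that] by simp
  show ?thesis
    using shift_le step_le tail_step_eq by (auto intro!: asymp_T_inv_in_measureI[OF M T])
qed

end
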